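(* Let $n_*>2$ be an integer, $\phi:(n_*,+\infty)\to(1,+\infty)$ strictly increasing, and $\mathsf{G}\in\mathbb{G}(n_*,\phi)$. Then for every $x\in\mathsf{V}$ there exists $N_x\in\mathbb{N}$ such that, for all $N\ge N_x$, every $y\in\mathsf{B}(N,x)=\{y:\rho(x,y)\le N\}$ satisfies $n(y)\le n_*$ or $\phi(n(y))\le 2N$ (i.e. $\max_{y\in\mathsf{B}(N,x)}n(y)\le\phi^{-1}(2N)$).
   Context: $\mathsf{G}=(\mathsf{V},\mathsf{E})$ is a countable, connected, locally finite undirected graph; $n(x)$ is the degree, $\rho$ the path distance. For integer $n_*>2$, $\mathsf{V}_*=\{x:n(x)\le n_*\}$, $\mathsf{V}_*^c=\mathsf{V}\setminus\mathsf{V}_*$. For strictly increasing $\phi:(n_*,+\infty)\to(0,+\infty)$, $\mathbb{G}(n_*,\phi)$ is the family of graphs with $\rho(x,y)\ge\phi[\max\{n(x),n(y)\}]$ for all $x,y\in\mathsf{V}_*^c$. *)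

theory Defs
  imports Complex_Main "HOL-Library.Countable_Set"
begin

definition ugraph :: "'a set \<Rightarrow> ('a \<Rightarrow> 'a \<Rightarrow> bool) \<Rightarrow> bool" where
  "ugraph V E \<longleftrightarrow> (\<forall>x y. E x y \<longrightarrow> x \<in> V \<and> y \<in> V \<and> E y x \<and> x \<noteq> y)"

definition edge_rel :: "'a set \<Rightarrow> ('a \<Rightarrow> 'a \<Rightarrow> bool) \<Rightarrow> ('a \<times> 'a) set" where
  "edge_rel V E = {(x, y). x \<in> V \<and> y \<in> V \<and> E x y}"

definition degree :: "'a set \<Rightarrow> ('a \<Rightarrow> 'a \<Rightarrow> bool) \<Rightarrow> 'a \<Rightarrow> nat" where
  "degree V E x = card {y \<in> V. E x y}"

definition locally_finite :: "'a set \<Rightarrow> ('a \<Rightarrow> 'a \<Rightarrow> bool) \<Rightarrow> bool" where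
  "locally_finite V E \<longleftrightarrow> (\<forall>x\<in>V. finite {y \<in> V. E x y})"

definition connected_graph :: "'a set \<Rightarrow> ('a \<Rightarrow> 'a \<Rightarrow> bool) \<Rightarrow> bool" where
  "connected_graph V E \<longleftrightarrow> (\<forall>x\<in>V. \<forall>y\<in>V. (x, y) \<in> (edge_rel V E)\<^sup>*)"

definition path_dist :: "'a set \<Rightarrow> ('a \<Rightarrow> 'a \<Rightarrow> bool) \<Rightarrow> 'a \<Rightarrow> 'a \<Rightarrow> nat" where
  "path_dist V E x y = (LEAST k. (x, y) \<in> (edge_rel V E) ^^ k)"

definition in_class_G :: "'a set \<Rightarrow> ('a \<Rightarrow> 'a \<Rightarrow> bool) \<Rightarrow> nat \<Rightarrow> (real \<Rightarrow> real) \<Rightarrow> bool" where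
  "in_class_G V E nstar \<phi> \<longleftrightarrow>
     (\<forall>x\<in>V. \<forall>y\<in>V. x \<noteq> y \<longrightarrow> degree V E x > nstar \<longrightarrow> degree V E y > nstar \<longrightarrow>
        real (path_dist V E x y) \<ge> \<phi> (real (max (degree V E x) (degree V E y))))"

end

theory Submission
  imports Defs
begin

text \<open>Call a vertex heavy if its degree exceeds n_*. Two distinct heavy vertices y, w
satisfy \<phi>(n(y)) \<le> \<rho>(y, w). If there are at least two heavy vertices, take N so large
that the ball B(N, x) contains two of them: then every heavy y in the ball has a heavy
companion w \<noteq> y in the ball, and \<rho>(y, w) \<le> 2N by the triangle inequality through x.
If there is at most one heavy vertex z, any N \<ge> \<phi>(n(z))/2 works.\<close>

lemma relpow_sym:
  assumes "sym R" and "(x, y) \<in> R ^^ k"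
  shows "(y, x) \<in> R ^^ k"
  using assms(2)
proof (induction k arbitrary: x y)
  case 0
  then show ?case by simp
next
  case (Suc k)
  then obtain z where "(x, z) \<in> R ^^ k" "(z, y) \<in> R" by auto
  with Suc.IH \<open>sym R\<close> have "(z, x) \<in> R ^^ k" "(y, z) \<in> R" by (auto dest: symD)
  then show ?case by (metis relpow_Suc_I2)
qed

lemma path_dist_le:
  assumes "(x, y) \<in> edge_rel V E ^^ k"
  shows "path_dist V E x y \<le> k"
  using assms unfolding path_dist_def by (rule Least_le)

lemma path_dist_relpow:
  assumes "connected_graph V E" and "x \<in> V" and "y \<in> V"
  shows "(x, y) \<in> edge_rel V E ^^ path_dist V E x y"
proof -
  have "\<exists>k. (x, y) \<in> edge_rel V E ^^ k"
    using assms unfolding connected_graph_def by (meson rtrancl_imp_relpow)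
  then show ?thesis unfolding path_dist_def by (rule LeastI_ex)
qed

lemma path_dist_sym:
  assumes "ugraph V E" and "connected_graph V E" and "x \<in> V" and "y \<in> V"
  shows "path_dist V E x y = path_dist V E y x"
proof -
  have "sym (edge_rel V E)"
    using assms(1) unfolding ugraph_def edge_rel_def by (auto intro: symI)
  then have "path_dist V E y x \<le> path_dist V E x y" "path_dist V E x y \<le> path_dist V E y x"
    using assms(2-) by (meson path_dist_le path_dist_relpow relpow_sym)+
  then show ?thesis by simp
qed

lemma path_dist_triangle:
  assumes "connected_graph V E" and "x \<in> V" and "y \<in> V" and "z \<in> V"
  shows "path_dist V E x z \<le> path_dist V E x y + path_dist V E y z"
proof -
  have "(x, z) \<in> edge_rel V E ^^ path_dist V E x y O edge_rel V E ^^ path_dist V E y z"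
    using assms by (blast intro: path_dist_relpow)
  then have "(x, z) \<in> edge_rel V E ^^ (path_dist V E x y + path_dist V E y z)"
    by (simp add: relpow_add)
  then show ?thesis by (rule path_dist_le)
qed

lemma in_class_G_phi_degree_le_path_dist:
  assumes "in_class_G V E nstar \<phi>" and "strict_mono_on {real nstar<..} \<phi>"
    and "y \<in> V" and "w \<in> V" and "y \<noteq> w"
    and "degree V E y > nstar" and "degree V E w > nstar"
  shows "\<phi> (real (degree V E y)) \<le> real (path_dist V E y w)"
proof -
  have "\<phi> (real (degree V E y)) \<le> \<phi> (real (max (degree V E y) (degree V E w)))"
    using assms(6,7) by (intro strict_mono_on_leD[OF assms(2)]) auto
  also have "\<dots> \<le> real (path_dist V E y w)"
    using assms(1,3-) unfolding in_class_G_def by blast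
  finally show ?thesis .
qed

lemma in_class_G_heavy_in_ball:
  assumes "ugraph V E" and "connected_graph V E"
    and "in_class_G V E nstar \<phi>" and "strict_mono_on {real nstar<..} \<phi>"
    and "x \<in> V" and "y \<in> V" and "w \<in> V" and "y \<noteq> w"
    and "degree V E y > nstar" and "degree V E w > nstar"
    and "path_dist V E x y \<le> N" and "path_dist V E x w \<le> N"
  shows "\<phi> (real (degree V E y)) \<le> 2 * real N"
proof -
  have "path_dist V E y w \<le> path_dist V E y x + path_dist V E x w"
    using assms by (intro path_dist_triangle) auto
  also have "\<dots> = path_dist V E x y + path_dist V E x w"
    using path_dist_sym[OF assms(1,2) \<open>x \<in> V\<close> \<open>y \<in> V\<close>] by simp
  finally have "real (path_dist V E y w) \<le> 2 * real N"
    using assms(11,12) by linarith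
  with in_class_G_phi_degree_le_path_dist[OF assms(3,4,6-10)] show ?thesis
    by linarith
qed

lemma in_class_G_heavy_in_ball_with_two_heavy:
  assumes "ugraph V E" and "connected_graph V E"
    and "in_class_G V E nstar \<phi>" and "strict_mono_on {real nstar<..} \<phi>"
    and "x \<in> V" and "y \<in> V" and "degree V E y > nstar" and "path_dist V E x y \<le> N"
    and "y1 \<in> V" "degree V E y1 > nstar" "path_dist V E x y1 \<le> N"
    and "y2 \<in> V" "degree V E y2 > nstar" "path_dist V E x y2 \<le> N"
    and "y1 \<noteq> y2"
  shows "\<phi> (real (degree V E y)) \<le> 2 * real N"
proof (cases "y = y1")
  case True
  then show ?thesis
    using assms by (intro in_class_G_heavy_in_ball[where w = y2]) auto
next
  case False
  then show ?thesis
    using assms by (intro in_class_G_heavy_in_ball[where w = y1]) auto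
qed

theorem lemma5p6:
  fixes V :: "'a set" and E :: "'a \<Rightarrow> 'a \<Rightarrow> bool"
    and nstar :: nat and \<phi> :: "real \<Rightarrow> real"
  assumes graph: "ugraph V E" and ctbl: "countable V" and conn: "connected_graph V E"
    and lf: "locally_finite V E"
    and nstar: "nstar > 2"
    and mono: "strict_mono_on {real nstar<..} \<phi>"
    and range: "\<forall>t > real nstar. \<phi> t > 1"
    and G: "in_class_G V E nstar \<phi>"
  shows "\<forall>x\<in>V. \<exists>Nx::nat. \<forall>N\<ge>Nx. \<forall>y\<in>V. path_dist V E x y \<le> N \<longrightarrow>
           degree V E y \<le> nstar \<or> \<phi> (real (degree V E y)) \<le> 2 * real N"
proof
  fix x assume x: "x \<in> V"
  let ?heavy = "{v \<in> V. degree V E v > nstar}"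
  consider (two) y1 y2 where "y1 \<in> ?heavy" "y2 \<in> ?heavy" "y1 \<noteq> y2"
    | (at_most_one) z where "?heavy \<subseteq> {z}"
    by blast
  then show "\<exists>Nx::nat. \<forall>N\<ge>Nx. \<forall>y\<in>V. path_dist V E x y \<le> N \<longrightarrow>
           degree V E y \<le> nstar \<or> \<phi> (real (degree V E y)) \<le> 2 * real N"
  proof cases
    case two
    show ?thesis
    proof (intro exI[of _ "max (path_dist V E x y1) (path_dist V E x y2)"] allI impI ballI)
      fix N y
      assume "max (path_dist V E x y1) (path_dist V E x y2) \<le> N" "y \<in> V"
        "path_dist V E x y \<le> N"
      with two have "\<phi> (real (degree V E y)) \<le> 2 * real N" if "degree V E y > nstar"
        using that by (intro in_class_G_heavy_in_ball_with_two_heavy[OF graph conn G mono x]) auto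
      then show "degree V E y \<le> nstar \<or> \<phi> (real (degree V E y)) \<le> 2 * real N"
        by linarith
    qed
  next
    case at_most_one
    have "\<phi> (real (degree V E z)) \<le> 2 * real N" if "nat \<lceil>\<phi> (real (degree V E z)) / 2\<rceil> \<le> N" for N
      using that by linarith
    with at_most_one show ?thesis
      by (intro exI[of _ "nat \<lceil>\<phi> (real (degree V E z)) / 2\<rceil>"]) (auto simp: not_le)
  qed
qed

end
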